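(* Let $t_1(x,y):=(x\wedge y)\vee(x\vee y)'$ and $t(x,y,z):=\Bigg(\bigg(\Big(\big((x\vee y)\wedge z\big)'\vee x\Big)\wedge(x\vee y)\bigg)'\vee x\Bigg)\wedge\Big(\big((x\vee y)\wedge z\big)'\vee y\Big)\wedge(x\vee y)$. Then the variety $\mathcal V$ satisfies the identities: (i) $x\vee(x\wedge y)'\approx1$; (ii) $y\vee(x\wedge y)'\approx1$; (iii) $x\approx(x\vee y)\wedge\big(x\vee(x\vee y)'\big)$; (iv) $y\approx(x\vee y)\wedge\big(y\vee(x\vee y)'\big)$; (v) $(x\vee y)\wedge t_1(x,y)\approx x\wedge y$; (vi) $t_1(x,x)\approx1$; (vii) $t\big(x,y,t_1(x,y)\big)\approx x$; (viii) $t(x,y,1)\approx y$.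
   Context: $\mathcal V$ is the variety of algebras $(L,\vee,\wedge,{}',0,1)$ that are bounded lattices with a complementation $'$ (i.e. $x\vee x'\approx1$, $x\wedge x'\approx0$) satisfying the identities $x\vee y'\approx y'\vee\big((x\vee y')\wedge y\big)$ and $x\wedge y\approx x\wedge\big((x\wedge y)\vee x'\big)$. *)

theory Defs
  imports Main
begin

definition in_V :: "('a::bounded_lattice \<Rightarrow> 'a) \<Rightarrow> bool" where
  "in_V c \<longleftrightarrow>
     (\<forall>x. sup x (c x) = top) \<and>
     (\<forall>x. inf x (c x) = bot) \<and>
     (\<forall>x y. sup x (c y) = sup (c y) (inf (sup x (c y)) y)) \<and>
     (\<forall>x y. inf x y = inf x (sup (inf x y) (c x)))"

definition t1 :: "('a::bounded_lattice \<Rightarrow> 'a) \<Rightarrow> 'a \<Rightarrow> 'a \<Rightarrow> 'a" where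
  "t1 c x y = sup (inf x y) (c (sup x y))"

definition tt :: "('a::bounded_lattice \<Rightarrow> 'a) \<Rightarrow> 'a \<Rightarrow> 'a \<Rightarrow> 'a \<Rightarrow> 'a" where
  "tt c x y z =
     inf (inf (sup (c (inf (sup (c (inf (sup x y) z)) x) (sup x y))) x)
              (sup (c (inf (sup x y) z)) y))
         (sup x y)"

end

theory Submission
  imports Defs
begin

text \<open>Under comparability hypotheses the two defining identities of the variety become
  relative orthomodular laws: \<open>c y \<le> a\<close> implies \<open>a = sup (c y) (inf a y)\<close>, and
  \<open>b \<le> x\<close> implies \<open>b = inf x (sup b (c x))\<close>. Identities (i)--(v) are instances of
  these at suitable comparable pairs. In (vii) and (viii) the inner subterms collapse to
  \<open>top\<close> or to \<open>sup x y\<close> by (i), (ii), (v) and complementation, and what remains is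
  (iii) or (iv).\<close>

context
  fixes c :: "'a::bounded_lattice \<Rightarrow> 'a"
  assumes V: "in_V c"
begin

lemma sup_compl_top: "sup x (c x) = top"
  using V unfolding in_V_def by blast

lemma compl_le_imp_eq_sup_inf:
  assumes "c y \<le> a"
  shows "a = sup (c y) (inf a y)"
proof -
  have "sup a (c y) = sup (c y) (inf (sup a (c y)) y)"
    using V unfolding in_V_def by blast
  with assms show ?thesis by (simp add: sup.absorb1)
qed

lemma le_imp_eq_inf_sup_compl:
  assumes "b \<le> x"
  shows "b = inf x (sup b (c x))"
proof -
  have "inf x b = inf x (sup (inf x b) (c x))"
    using V unfolding in_V_def by blast
  with assms show ?thesis by (simp add: inf.absorb2)
qed

lemma sup_compl_inf_left: "sup x (c (inf x y)) = top"
proof -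
  have "sup x (c (inf x y)) = sup (c (inf x y)) (inf (sup x (c (inf x y))) (inf x y))"
    by (rule compl_le_imp_eq_sup_inf) simp
  also have "inf (sup x (c (inf x y))) (inf x y) = inf x y"
    by (simp add: inf.absorb2 le_supI1)
  also have "sup (c (inf x y)) (inf x y) = top"
    using sup_compl_top by (simp add: sup.commute)
  finally show ?thesis .
qed

lemma sup_compl_inf_right: "sup y (c (inf x y)) = top"
  using sup_compl_inf_left [of y x] by (simp add: inf.commute)

lemma inf_sup_sup_compl_sup_left: "x = inf (sup x y) (sup x (c (sup x y)))"
  by (rule le_imp_eq_inf_sup_compl) simp

lemma inf_sup_sup_compl_sup_right: "y = inf (sup x y) (sup y (c (sup x y)))"
  by (rule le_imp_eq_inf_sup_compl) simp

lemma inf_sup_t1: "inf (sup x y) (t1 c x y) = inf x y"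
  unfolding t1_def using le_imp_eq_inf_sup_compl [of "inf x y" "sup x y"]
  by (simp add: le_supI1)

lemma t1_diag: "t1 c x x = top"
  unfolding t1_def using sup_compl_top by simp

lemma inf_sup_compl_sup_left: "inf (sup (c (sup x y)) x) (sup x y) = x"
  using inf_sup_sup_compl_sup_left [of x y, symmetric] by (simp add: ac_simps)

lemma inf_sup_compl_sup_right: "inf (sup (c (sup x y)) y) (sup x y) = y"
  using inf_sup_sup_compl_sup_right [where x = x and y = y, symmetric] by (simp add: ac_simps)

lemma tt_t1: "tt c x y (t1 c x y) = x"
proof -
  have "sup (c (inf x y)) x = top" "sup (c (inf x y)) y = top"
    using sup_compl_inf_left [of x y] sup_compl_inf_right [where x = x and y = y]
    by (simp_all add: sup.commute)
  then show ?thesis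
    unfolding tt_def inf_sup_t1 by (simp add: inf_sup_compl_sup_left)
qed

lemma tt_top: "tt c x y top = y"
proof -
  have "sup (c x) x = top"
    using sup_compl_top [of x] by (simp add: sup.commute)
  then show ?thesis
    unfolding tt_def by (simp add: inf_sup_compl_sup_left inf_sup_compl_sup_right flip: inf.assoc)
qed

end

theorem lemma1:
  fixes c :: "'a::bounded_lattice \<Rightarrow> 'a"
  assumes "in_V c"
  shows "\<forall>x y.
           sup x (c (inf x y)) = top \<and>
           sup y (c (inf x y)) = top \<and>
           x = inf (sup x y) (sup x (c (sup x y))) \<and>
           y = inf (sup x y) (sup y (c (sup x y))) \<and>
           inf (sup x y) (t1 c x y) = inf x y \<and>
           t1 c x x = top \<and>
           tt c x y (t1 c x y) = x \<and>
           tt c x y top = y"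
  using sup_compl_inf_left [OF assms] sup_compl_inf_right [OF assms]
    inf_sup_sup_compl_sup_left [OF assms] inf_sup_sup_compl_sup_right [OF assms]
    inf_sup_t1 [OF assms] t1_diag [OF assms] tt_t1 [OF assms] tt_top [OF assms]
  by blast

end
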